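(* In the basic model with $n$ odd, the direction agreement problem can be solved deterministically in $O(1)$ rounds.
   Context: Model (basic): $n>4$ agents are at distinct, arbitrary initial positions on a circle of circumference $1$ and act in synchronised unit-time rounds. Each agent has its own notion of right (clockwise) and left; these need not be consistent across agents. At the start of each round every agent $a$ chooses $\mathrm{dir}_a\in\{\text{right},\text{left}\}$ and moves at unit speed. Agents never pass: two colliding agents instantly reverse direction. There is no communication. At the end of a round each agent learns only the clockwise distance, in its own orientation, from its start-of-round position to its end-of-round position. Agents have distinct IDs in $\{1,\dots,N\}$, $N\ge n$ known, and know the parity of $n$. The direction agreement problem is solved when all agents have a coherent view of which direction is clockwise. *)

theory Defs
  imports Complex_Main
begin

text \<open>
A configuration gives each agent a position
on the circle of circumference 1, represented by a real in [0,1) (clockwise = increasing),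
and its history: the list of distances it has observed so far.
orient a = True iff the local "right" of agent a is the global clockwise direction.
A deterministic protocol is a function alg (ID) (history) returning True = "move right"
(in the agent's own orientation); the output function out (ID) (history) returns
True iff the agent declares its local right to be clockwise.

Agents move at unit speed for unit time, reversing upon collision.
Equivalently (ghost particles), the set of occupied points after the round equals the
set before, and the cyclic order of agents is preserved, with every agent advancing
by r = k - m positions in clockwise cyclic order, where k (m) is the number of agents
that moved clockwise (counterclockwise).
\<close>

definition rank :: "nat \<Rightarrow> (nat \<Rightarrow> real) \<Rightarrow> nat \<Rightarrow> nat" where
  "rank n p a = card {b. b < n \<and> p b < p a}"

definition target :: "nat \<Rightarrow> (nat \<Rightarrow> real) \<Rightarrow> int \<Rightarrow> nat \<Rightarrow> nat" where
  "target n p r a = (THE b. b < n \<and> int (rank n p b) = (int (rank n p a) + r) mod int n)"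

definition round_step ::
  "(nat \<Rightarrow> real list \<Rightarrow> bool) \<Rightarrow> nat \<Rightarrow> (nat \<Rightarrow> nat) \<Rightarrow> (nat \<Rightarrow> bool) \<Rightarrow>
   (nat \<Rightarrow> real) \<times> (nat \<Rightarrow> real list) \<Rightarrow> (nat \<Rightarrow> real) \<times> (nat \<Rightarrow> real list)" where
  "round_step alg n ID orient c =
     (let p = fst c; H = snd c;
          cw = (\<lambda>a. alg (ID a) (H a) = orient a);
          k = card {a. a < n \<and> cw a};
          r = int k - int (n - k);
          tg = target n p r
      in (\<lambda>a. p (tg a),
          \<lambda>a. H a @ [if orient a then frac (p (tg a) - p a) else frac (p a - p (tg a))]))"

definition run ::
  "(nat \<Rightarrow> real list \<Rightarrow> bool) \<Rightarrow> nat \<Rightarrow> (nat \<Rightarrow> nat) \<Rightarrow> (nat \<Rightarrow> bool) \<Rightarrow>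
   (nat \<Rightarrow> real) \<Rightarrow> nat \<Rightarrow> (nat \<Rightarrow> real) \<times> (nat \<Rightarrow> real list)" where
  "run alg n ID orient p0 t = (round_step alg n ID orient ^^ t) (p0, \<lambda>_. [])"

definition solves_direction_agreement ::
  "(nat \<Rightarrow> real list \<Rightarrow> bool) \<Rightarrow> (nat \<Rightarrow> real list \<Rightarrow> bool) \<Rightarrow> nat \<Rightarrow> nat \<Rightarrow> nat \<Rightarrow> bool" where
  "solves_direction_agreement alg out T n N \<longleftrightarrow>
     (\<forall>ID p0 orient.
        inj_on ID {..<n} \<longrightarrow> ID ` {..<n} \<subseteq> {1..N} \<longrightarrow>
        inj_on p0 {..<n} \<longrightarrow> p0 ` {..<n} \<subseteq> {0..<1} \<longrightarrow>
        (let H = snd (run alg n ID orient p0 T) in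
          \<forall>a b. a < n \<longrightarrow> b < n \<longrightarrow>
            ((out (ID a) (H a) = orient a) \<longleftrightarrow> (out (ID b) (H b) = orient b))))"

end

theory Submission
  imports Defs
begin

text \<open>
All agents move right (in their own frame) in both rounds and then declare their right to be
clockwise iff the two observed distances add up to less than 1. If \<open>k\<close> agents face clockwise,
every agent advances \<open>r = 2k - n\<close> places in the cyclic order of positions per round. An agent
facing clockwise thus covers less than a full turn in the two rounds iff \<open>r mod n < n/2\<close>; an
agent facing the other way observes the reversed order, i.e. the shift \<open>-r\<close>. When both
orientations occur, \<open>r\<close> is odd with \<open>|r| < n\<close>, so \<open>n\<close> does not divide it, and for odd \<open>n\<close>
exactly one of \<open>r mod n\<close> and \<open>(-r) mod n\<close> is below \<open>n/2\<close>: all agents are then right or all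
are wrong.
\<close>

lemma frac_eq_if_abs_less_1:
  fixes d :: real
  assumes "\<bar>d\<bar> < 1"
  shows "frac d = (if 0 \<le> d then d else d + 1)"
proof (cases "0 \<le> d")
  case False
  have "frac d = frac (d + 1)" by (simp add: frac_def)
  also have "\<dots> = d + 1" using assms False by (subst frac_eq) auto
  finally show ?thesis using False by simp
qed (use assms in \<open>simp add: frac_eq\<close>)

lemma mod_eq_if_abs_less:
  fixes d n :: int
  assumes "\<bar>d\<bar> < n"
  shows "d mod n = (if 0 \<le> d then d else d + n)"
proof (cases "0 \<le> d")
  case False
  have "d mod n = (d + n) mod n" by simp
  also have "\<dots> = d + n" using assms False by (intro mod_pos_pos_trivial) auto
  finally show ?thesis using False by simp
qed (use assms in \<open>simp add: mod_pos_pos_trivial\<close>)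

text \<open>Two consecutive clockwise arcs from \<open>x\<close> via \<open>y\<close> to \<open>z\<close> stay within one turn iff \<open>y\<close> lies
  on the clockwise arc from \<open>x\<close> to \<open>z\<close>.\<close>

lemma frac_add_frac_less_1_iff:
  fixes x y z :: real
  shows "frac (y - x) + frac (z - y) < 1 \<longleftrightarrow> frac (y - x) \<le> frac (z - x)"
proof -
  define m where "m = \<lfloor>z - x\<rfloor> - \<lfloor>y - x\<rfloor> - \<lfloor>z - y\<rfloor>"
  have m: "frac (y - x) + frac (z - y) = frac (z - x) + of_int m"
    by (simp add: m_def frac_def)
  have "-1 < m" "m < 2"
    using m frac_lt_1[of "z - x"] frac_ge_0[of "y - x"] frac_ge_0[of "z - y"]
      frac_lt_1[of "y - x"] frac_lt_1[of "z - y"] frac_ge_0[of "z - x"] by linarith+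
  then consider "frac (y - x) + frac (z - y) = frac (z - x)"
    | "frac (y - x) + frac (z - y) = frac (z - x) + 1"
    using m by fastforce
  then show ?thesis
    using frac_lt_1[of "z - x"] frac_ge_0[of "z - x"] frac_ge_0[of "z - y"] frac_lt_1[of "z - y"]
    by cases linarith+
qed

lemma frac_le_frac_iff_mod_le_mod:
  fixes q :: "'a \<Rightarrow> real" and k :: "'a \<Rightarrow> int" and n :: int
  assumes iso: "\<And>u v. u \<in> S \<Longrightarrow> v \<in> S \<Longrightarrow> q u \<le> q v \<longleftrightarrow> k u \<le> k v"
    and q: "\<And>u v. u \<in> S \<Longrightarrow> v \<in> S \<Longrightarrow> \<bar>q u - q v\<bar> < 1"
    and k: "\<And>u v. u \<in> S \<Longrightarrow> v \<in> S \<Longrightarrow> \<bar>k u - k v\<bar> < n"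
    and S: "a \<in> S" "b \<in> S" "c \<in> S"
  shows "frac (q b - q a) \<le> frac (q c - q a) \<longleftrightarrow> (k b - k a) mod n \<le> (k c - k a) mod n"
proof -
  have "frac (q b - q a) \<le> frac (q c - q a) \<longleftrightarrow>
      (if q a \<le> q b then q b - q a else q b - q a + 1)
        \<le> (if q a \<le> q c then q c - q a else q c - q a + 1)"
    using q[OF S(2,1)] q[OF S(3,1)] by (simp add: frac_eq_if_abs_less_1)
  also have "\<dots> \<longleftrightarrow>
      (if k a \<le> k b then k b - k a else k b - k a + n)
        \<le> (if k a \<le> k c then k c - k a else k c - k a + n)"
    using iso[OF S(1,2)] iso[OF S(1,3)] iso[OF S(2,3)] iso[OF S(3,2)]
      q[OF S(2,1)] q[OF S(3,1)] q[OF S(2,3)] k[OF S(2,1)] k[OF S(3,1)] k[OF S(2,3)]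
    by (auto split: if_splits)
  also have "\<dots> \<longleftrightarrow> (k b - k a) mod n \<le> (k c - k a) mod n"
    using k[OF S(2,1)] k[OF S(3,1)] by (simp add: mod_eq_if_abs_less)
  finally show ?thesis .
qed

lemma mod_le_double_mod_iff:
  fixes s n :: int
  assumes "0 < n"
  shows "s mod n \<le> (2 * s) mod n \<longleftrightarrow> 2 * (s mod n) < n"
proof -
  define t where "t = s mod n"
  have t: "0 \<le> t" "t < n" using assms by (simp_all add: t_def)
  have double: "(2 * s) mod n = (if n \<le> 2 * t then 2 * t - n else 2 * t)" if "t \<noteq> 0"
  proof -
    have "(2 * s) mod n = (2 * t - n) mod n"
      by (simp add: t_def mod_mult_right_eq)
    also have "\<dots> = (if n \<le> 2 * t then 2 * t - n else 2 * t)"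
      using t that by (subst mod_eq_if_abs_less) auto
    finally show ?thesis .
  qed
  show ?thesis
    using t assms double by (cases "t = 0") (auto simp flip: t_def)
qed

lemma two_arcs_less_1_iff:
  fixes q :: "'a \<Rightarrow> real" and k :: "'a \<Rightarrow> int" and n s :: int
  assumes iso: "\<And>u v. u \<in> S \<Longrightarrow> v \<in> S \<Longrightarrow> q u \<le> q v \<longleftrightarrow> k u \<le> k v"
    and q: "\<And>u v. u \<in> S \<Longrightarrow> v \<in> S \<Longrightarrow> \<bar>q u - q v\<bar> < 1"
    and k: "\<And>u v. u \<in> S \<Longrightarrow> v \<in> S \<Longrightarrow> \<bar>k u - k v\<bar> < n"
    and S: "a \<in> S" "b \<in> S" "c \<in> S"
    and kb: "k b mod n = (k a + s) mod n" and kc: "k c mod n = (k b + s) mod n"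
  shows "frac (q b - q a) + frac (q c - q b) < 1 \<longleftrightarrow> 2 * (s mod n) < n"
proof -
  have "0 < n" using k[OF S(1,1)] by simp
  have "(k b - k a) mod n = s mod n"
    by (metis kb add_diff_cancel_left' mod_diff_left_eq)
  moreover have "(k c - k a) mod n = (2 * s) mod n"
    by (metis kb kc add_diff_cancel_left' mod_diff_left_eq mod_add_left_eq mult_2 add.assoc)
  ultimately show ?thesis
    using frac_add_frac_less_1_iff
      frac_le_frac_iff_mod_le_mod[where S = S and q = q and k = k, OF iso q k S]
      mod_le_double_mod_iff[OF \<open>0 < n\<close>] by simp
qed

lemma less_half_mod_iff_not_less_half_mod_uminus:
  fixes r n :: int
  assumes "odd n" and "\<not> n dvd r"
  shows "2 * (r mod n) < n \<longleftrightarrow> \<not> 2 * ((- r) mod n) < n"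
proof -
  have "2 * (r mod n) \<noteq> n" using \<open>odd n\<close> by (metis dvd_triv_left)
  then show ?thesis
    using assms by (auto simp add: zmod_zminus1_eq_if mod_eq_0_iff_dvd)
qed

lemma rank_less_rank:
  fixes p :: "nat \<Rightarrow> real"
  assumes "a < n" "p a < p b"
  shows "rank n p a < rank n p b"
  unfolding rank_def
proof (rule psubset_card_mono)
  show "{c. c < n \<and> p c < p a} \<subset> {c. c < n \<and> p c < p b}"
    using assms by auto
qed simp

lemma rank_less:
  fixes p :: "nat \<Rightarrow> real"
  assumes "a < n"
  shows "rank n p a < n"
proof -
  have "rank n p a \<le> card ({..<n} - {a})"
    unfolding rank_def by (intro card_mono) auto
  then show ?thesis using assms by simp
qed

lemma rank_le_rank_iff:
  fixes p :: "nat \<Rightarrow> real"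
  assumes "inj_on p {..<n}" "a < n" "b < n"
  shows "rank n p a \<le> rank n p b \<longleftrightarrow> p a \<le> p b"
proof (cases "a = b")
  case False
  then have "p a \<noteq> p b" using assms by (auto dest: inj_onD)
  then have "p a < p b \<or> p b < p a" by linarith
  then show ?thesis
    using rank_less_rank[of a n p b] rank_less_rank[of b n p a] assms by auto
qed simp

lemma bij_betw_rank:
  fixes p :: "nat \<Rightarrow> real"
  assumes "inj_on p {..<n}"
  shows "bij_betw (rank n p) {..<n} {..<n}"
proof -
  have "inj_on (rank n p) {..<n}"
    by (rule inj_onI) (use assms in \<open>metis antisym order_refl rank_le_rank_iff lessThan_iff inj_onD\<close>)
  moreover have "rank n p ` {..<n} \<subseteq> {..<n}" using rank_less by auto
  ultimately show ?thesis
    by (simp add: bij_betw_def endo_inj_surj)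
qed

lemma rank_target:
  fixes p :: "nat \<Rightarrow> real"
  assumes "inj_on p {..<n}" "a < n"
  shows "target n p r a < n" and "int (rank n p (target n p r a)) = (int (rank n p a) + r) mod int n"
proof -
  let ?v = "(int (rank n p a) + r) mod int n"
  have "nat ?v \<in> rank n p ` {..<n}"
    using bij_betw_rank[OF assms(1)] assms(2) by (simp add: bij_betw_def nat_less_iff)
  moreover have "0 \<le> ?v" using assms(2) by simp
  ultimately have "\<exists>b. b < n \<and> int (rank n p b) = ?v"
    by (metis imageE lessThan_iff int_nat_eq)
  moreover have "b = b'" if "b < n \<and> int (rank n p b) = ?v" "b' < n \<and> int (rank n p b') = ?v" for b b'
  proof -
    have "rank n p b = rank n p b'" using that by simp
    then show ?thesis
      by (rule inj_onD[OF bij_betw_imp_inj_on[OF bij_betw_rank[OF assms(1)]]]) (use that in simp_all)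
  qed
  ultimately have "\<exists>!b. b < n \<and> int (rank n p b) = ?v" by blast
  then have "target n p r a < n \<and> int (rank n p (target n p r a)) = ?v"
    unfolding target_def by (rule theI')
  then show "target n p r a < n" and "int (rank n p (target n p r a)) = ?v" by auto
qed

lemma bij_betw_target:
  fixes p :: "nat \<Rightarrow> real"
  assumes "inj_on p {..<n}"
  shows "bij_betw (target n p r) {..<n} {..<n}"
proof -
  have "inj_on (target n p r) {..<n}"
  proof (rule inj_onI)
    fix a b assume a: "a \<in> {..<n}" and b: "b \<in> {..<n}" and eq: "target n p r a = target n p r b"
    have "(int (rank n p a) + r) mod int n = (int (rank n p b) + r) mod int n"
      using rank_target(2)[OF assms, of a r] rank_target(2)[OF assms, of b r] a b eq by simp
    then have "int (rank n p a) mod int n = int (rank n p b) mod int n"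
      by (metis add_diff_cancel_right' mod_diff_left_eq)
    then have "rank n p a = rank n p b"
      using rank_less a b by simp
    then show "a = b"
      using bij_betw_rank[OF assms] a b by (auto simp: bij_betw_def dest: inj_onD)
  qed
  moreover have "target n p r ` {..<n} \<subseteq> {..<n}" using rank_target(1)[OF assms] by auto
  ultimately show ?thesis
    by (simp add: bij_betw_def endo_inj_surj)
qed

lemma rank_comp_bij:
  fixes p :: "nat \<Rightarrow> real"
  assumes "bij_betw f {..<n} {..<n}" "a < n"
  shows "rank n (\<lambda>x. p (f x)) a = rank n p (f a)"
proof -
  have "bij_betw f {b. b < n \<and> p (f b) < p (f a)} {c. c < n \<and> p c < p (f a)}"
    using assms(1) unfolding bij_betw_def by (auto intro: inj_on_subset)
  then show ?thesis
    unfolding rank_def by (rule bij_betw_same_card)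
qed

lemma two_round_distances_less_1_iff:
  fixes p :: "nat \<Rightarrow> real" and r :: int
  assumes inj: "inj_on p {..<n}" and range: "p ` {..<n} \<subseteq> {0..<1}" and a: "a < n"
  defines "p1 \<equiv> \<lambda>a. p (target n p r a)"
  defines "p2 \<equiv> \<lambda>a. p1 (target n p1 r a)"
  shows "frac (p1 a - p a) + frac (p2 a - p1 a) < 1 \<longleftrightarrow> 2 * (r mod int n) < int n"
    and "frac (p a - p1 a) + frac (p1 a - p2 a) < 1 \<longleftrightarrow> 2 * ((- r) mod int n) < int n"
proof -
  define b where "b = target n p r a"
  define c where "c = target n p r (target n p1 r a)"
  have bij: "bij_betw (target n p r) {..<n} {..<n}" by (rule bij_betw_target[OF inj])
  have inj1: "inj_on p1 {..<n}"
    unfolding p1_def using comp_inj_on[OF bij_betw_imp_inj_on[OF bij]] inj bij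
    by (simp add: bij_betw_def comp_def)
  have S: "a \<in> {..<n}" "b \<in> {..<n}" "c \<in> {..<n}"
    using a rank_target(1)[OF inj] rank_target(1)[OF inj1] by (simp_all add: b_def c_def)
  have kb: "int (rank n p b) = (int (rank n p a) + r) mod int n"
    unfolding b_def by (rule rank_target(2)[OF inj a])
  have rank1: "rank n p1 x = rank n p (target n p r x)" if "x < n" for x
    unfolding p1_def by (rule rank_comp_bij[OF bij that])
  have "int (rank n p c) = int (rank n p1 (target n p1 r a))"
    unfolding c_def using rank1 rank_target(1)[OF inj1 a] by simp
  also have "\<dots> = (int (rank n p b) + r) mod int n"
    using rank_target(2)[OF inj1 a] rank1[OF a] by (simp add: b_def)
  finally have kc: "int (rank n p c) = (int (rank n p b) + r) mod int n" .
  have iso: "p u \<le> p v \<longleftrightarrow> int (rank n p u) \<le> int (rank n p v)"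
    if "u \<in> {..<n}" "v \<in> {..<n}" for u v
    using rank_le_rank_iff[OF inj] that by simp
  have dist: "\<bar>p u - p v\<bar> < 1" if "u \<in> {..<n}" "v \<in> {..<n}" for u v
  proof -
    have "p u \<in> {0..<1}" "p v \<in> {0..<1}" using range that by auto
    then show ?thesis by auto
  qed
  have rank_dist: "\<bar>int (rank n p u) - int (rank n p v)\<bar> < int n"
    if "u \<in> {..<n}" "v \<in> {..<n}" for u v
    using rank_less[of u n p] rank_less[of v n p] that by auto
  have "p1 a = p b" "p2 a = p c" by (simp_all add: p1_def p2_def b_def c_def)
  \<comment> \<open>The counterclockwise view is the clockwise view of the mirror image \<open>-p\<close>, whose ranks
    are reversed.\<close>
  then show "frac (p1 a - p a) + frac (p2 a - p1 a) < 1 \<longleftrightarrow> 2 * (r mod int n) < int n"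
    and "frac (p a - p1 a) + frac (p1 a - p2 a) < 1 \<longleftrightarrow> 2 * ((- r) mod int n) < int n"
    using two_arcs_less_1_iff[where q = p and k = "\<lambda>u. int (rank n p u)", OF iso dist rank_dist S]
      two_arcs_less_1_iff[where q = "\<lambda>u. - p u" and k = "\<lambda>u. - int (rank n p u)" and s = "- r",
        OF _ _ _ S] iso dist rank_dist kb kc
    by (simp_all add: mod_minus_eq)
qed

lemma always_right_solves_direction_agreement:
  assumes "odd n"
  shows "solves_direction_agreement (\<lambda>_ _. True) (\<lambda>_ H. H ! 0 + H ! 1 < (1::real)) 2 n N"
  unfolding solves_direction_agreement_def Let_def
proof (intro allI impI)
  fix ID :: "nat \<Rightarrow> nat" and p :: "nat \<Rightarrow> real" and orient :: "nat \<Rightarrow> bool"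
  assume inj: "inj_on p {..<n}" and range: "p ` {..<n} \<subseteq> {0..<1}"
  define k where "k = card {a. a < n \<and> orient a}"
  define r where "r = int k - int (n - k)"
  define p1 where "p1 = (\<lambda>a. p (target n p r a))"
  define p2 where "p2 = (\<lambda>a. p1 (target n p1 r a))"
  define H where "H = snd (run (\<lambda>_ _. True) n ID orient p 2)"
  have H: "H a = (if orient a then [frac (p1 a - p a), frac (p2 a - p1 a)]
                               else [frac (p a - p1 a), frac (p1 a - p2 a)])" for a
    by (simp add: H_def run_def numeral_2_eq_2 round_step_def Let_def k_def r_def p1_def p2_def)
  have correct_iff: "(H a ! 0 + H a ! 1 < 1 \<longleftrightarrow> orient a) \<longleftrightarrow>
      (if orient a then 2 * (r mod int n) < int n else \<not> 2 * ((- r) mod int n) < int n)"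
    if "a < n" for a
    using two_round_distances_less_1_iff[OF inj range that, of r] by (simp add: H p1_def p2_def)
  show "(H a ! 0 + H a ! 1 < 1 \<longleftrightarrow> orient a) \<longleftrightarrow> (H b ! 0 + H b ! 1 < 1 \<longleftrightarrow> orient b)"
    if a: "a < n" and b: "b < n" for a b
  proof (cases "orient a = orient b")
    case False
    have "{a. a < n \<and> orient a} \<noteq> {}" and proper: "{a. a < n \<and> orient a} \<subset> {..<n}"
      using False a b by auto
    then have "0 < k" "k < n"
      using psubset_card_mono[OF finite_lessThan proper] by (simp_all add: k_def card_gt_0_iff)
    then have "odd r" "\<bar>r\<bar> < int n" using \<open>odd n\<close> by (auto simp: r_def)
    then have "\<not> int n dvd r" using dvd_imp_le_int[of r "int n"] by auto
    then show ?thesis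
      using correct_iff[OF a] correct_iff[OF b] False \<open>odd n\<close>
        less_half_mod_iff_not_less_half_mod_uminus[of "int n" r] by auto
  qed (use correct_iff[OF a] correct_iff[OF b] in auto)
qed

theorem proposition2:
  shows "\<exists>C::nat. \<forall>N::nat. \<exists>alg out T. T \<le> C \<and>
           (\<forall>n. 4 < n \<and> n \<le> N \<and> odd n \<longrightarrow> solves_direction_agreement alg out T n N)"
  using always_right_solves_direction_agreement by blast

end
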